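(* Let $k$ be a field and let $M$ be the $\mathrm{FI}^2$-module with $M_{a,b}=0$ for $(a,b)\in\{(0,0),(1,0),(0,1)\}$ and $M_{a,b}=k$ otherwise, in which every morphism induces the identity $k\to k$ or the zero map out of $0$. Then $M$ is indecomposable, and $M$ is not isomorphic to a direct sum of external tensor products $V\boxtimes W$ of $\mathrm{FI}$-modules $V,W$.
   Context: $\mathrm{FI}^2$ has objects pairs $(a,b)\in\mathbb{N}^2$ and morphisms pairs of injections $[a]\hookrightarrow[a']$, $[b]\hookrightarrow[b']$. An $\mathrm{FI}^2$-module is a functor to $k$-vector spaces. For $\mathrm{FI}$-modules $V,W$, $(V\boxtimes W)_{a,b}=V_a\otimes W_b$. *)

theory Defs
  imports Main
begin

text \<open>Vector spaces over a field 'k are modelled as subspaces of a function space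
  'x => 'k with pointwise operations (every k-vector space is isomorphic to one of
  these, and all ambient types are universally quantified in the main theorem).\<close>

definition fzero :: "'x \<Rightarrow> 'k::field" where
  "fzero = (\<lambda>_. 0)"

definition subspace_fn :: "('x \<Rightarrow> 'k::field) set \<Rightarrow> bool" where
  "subspace_fn S \<longleftrightarrow> fzero \<in> S \<and> (\<forall>u\<in>S. \<forall>v\<in>S. (\<lambda>p. u p + v p) \<in> S)
     \<and> (\<forall>c. \<forall>v\<in>S. (\<lambda>p. c * v p) \<in> S)"

definition linear_on :: "('x \<Rightarrow> 'k::field) set \<Rightarrow> ('y \<Rightarrow> 'k) set
    \<Rightarrow> (('x \<Rightarrow> 'k) \<Rightarrow> ('y \<Rightarrow> 'k)) \<Rightarrow> bool" where
  "linear_on S T h \<longleftrightarrow> (\<forall>v\<in>S. h v \<in> T)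
     \<and> (\<forall>u\<in>S. \<forall>v\<in>S. h (\<lambda>p. u p + v p) = (\<lambda>q. h u q + h v q))
     \<and> (\<forall>c. \<forall>v\<in>S. h (\<lambda>p. c * v p) = (\<lambda>q. c * h v q))"

text \<open>Morphisms of FI: injections [a] -> [a'], represented by functions on nat,
  only their values on {..<a} being relevant.\<close>

definition fi_mor :: "nat \<Rightarrow> nat \<Rightarrow> (nat \<Rightarrow> nat) \<Rightarrow> bool" where
  "fi_mor a a' f \<longleftrightarrow> inj_on f {..<a} \<and> f ` {..<a} \<subseteq> {..<a'}"

definition FI_module :: "(nat \<Rightarrow> ('x \<Rightarrow> 'k::field) set)
    \<Rightarrow> (nat \<Rightarrow> nat \<Rightarrow> (nat \<Rightarrow> nat) \<Rightarrow> ('x \<Rightarrow> 'k) \<Rightarrow> ('x \<Rightarrow> 'k)) \<Rightarrow> bool" where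
  "FI_module V act \<longleftrightarrow>
     (\<forall>n. subspace_fn (V n))
   \<and> (\<forall>a a' f. fi_mor a a' f \<longrightarrow> linear_on (V a) (V a') (act a a' f))
   \<and> (\<forall>a f v. fi_mor a a f \<and> (\<forall>j<a. f j = j) \<and> v \<in> V a \<longrightarrow> act a a f v = v)
   \<and> (\<forall>a a' a'' f g v. fi_mor a a' f \<and> fi_mor a' a'' g \<and> v \<in> V a
        \<longrightarrow> act a a'' (g \<circ> f) v = act a' a'' g (act a a' f v))
   \<and> (\<forall>a a' f f' v. fi_mor a a' f \<and> (\<forall>j<a. f j = f' j) \<and> v \<in> V a
        \<longrightarrow> act a a' f v = act a a' f' v)"

definition FI2_module :: "(nat \<Rightarrow> nat \<Rightarrow> ('x \<Rightarrow> 'k::field) set)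
    \<Rightarrow> (nat \<Rightarrow> nat \<Rightarrow> nat \<Rightarrow> nat \<Rightarrow> (nat \<Rightarrow> nat) \<Rightarrow> (nat \<Rightarrow> nat) \<Rightarrow> ('x \<Rightarrow> 'k) \<Rightarrow> ('x \<Rightarrow> 'k))
    \<Rightarrow> bool" where
  "FI2_module M act \<longleftrightarrow>
     (\<forall>a b. subspace_fn (M a b))
   \<and> (\<forall>a b a' b' f g. fi_mor a a' f \<and> fi_mor b b' g
        \<longrightarrow> linear_on (M a b) (M a' b') (act a b a' b' f g))
   \<and> (\<forall>a b f g v. fi_mor a a f \<and> fi_mor b b g \<and> (\<forall>j<a. f j = j) \<and> (\<forall>j<b. g j = j)
        \<and> v \<in> M a b \<longrightarrow> act a b a b f g v = v)
   \<and> (\<forall>a b a' b' a'' b'' f g f' g' v. fi_mor a a' f \<and> fi_mor b b' g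
        \<and> fi_mor a' a'' f' \<and> fi_mor b' b'' g' \<and> v \<in> M a b
        \<longrightarrow> act a b a'' b'' (f' \<circ> f) (g' \<circ> g) v
            = act a' b' a'' b'' f' g' (act a b a' b' f g v))
   \<and> (\<forall>a b a' b' f g f1 g1 v. fi_mor a a' f \<and> fi_mor b b' g
        \<and> (\<forall>j<a. f j = f1 j) \<and> (\<forall>j<b. g j = g1 j) \<and> v \<in> M a b
        \<longrightarrow> act a b a' b' f g v = act a b a' b' f1 g1 v)"

definition FI2_submodule :: "(nat \<Rightarrow> nat \<Rightarrow> ('x \<Rightarrow> 'k::field) set)
    \<Rightarrow> (nat \<Rightarrow> nat \<Rightarrow> nat \<Rightarrow> nat \<Rightarrow> (nat \<Rightarrow> nat) \<Rightarrow> (nat \<Rightarrow> nat) \<Rightarrow> ('x \<Rightarrow> 'k) \<Rightarrow> ('x \<Rightarrow> 'k))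
    \<Rightarrow> (nat \<Rightarrow> nat \<Rightarrow> ('x \<Rightarrow> 'k) set) \<Rightarrow> bool" where
  "FI2_submodule M act N \<longleftrightarrow>
     (\<forall>a b. subspace_fn (N a b) \<and> N a b \<subseteq> M a b)
   \<and> (\<forall>a b a' b' f g v. fi_mor a a' f \<and> fi_mor b b' g \<and> v \<in> N a b
        \<longrightarrow> act a b a' b' f g v \<in> N a' b')"

definition nonzero_sp :: "(nat \<Rightarrow> nat \<Rightarrow> ('x \<Rightarrow> 'k::field) set) \<Rightarrow> bool" where
  "nonzero_sp N \<longleftrightarrow> (\<exists>a b. N a b \<noteq> {fzero})"

definition FI2_indecomposable :: "(nat \<Rightarrow> nat \<Rightarrow> ('x \<Rightarrow> 'k::field) set)
    \<Rightarrow> (nat \<Rightarrow> nat \<Rightarrow> nat \<Rightarrow> nat \<Rightarrow> (nat \<Rightarrow> nat) \<Rightarrow> (nat \<Rightarrow> nat) \<Rightarrow> ('x \<Rightarrow> 'k) \<Rightarrow> ('x \<Rightarrow> 'k))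
    \<Rightarrow> bool" where
  "FI2_indecomposable M act \<longleftrightarrow> FI2_module M act \<and> nonzero_sp M \<and>
     \<not> (\<exists>N1 N2. FI2_submodule M act N1 \<and> FI2_submodule M act N2
          \<and> nonzero_sp N1 \<and> nonzero_sp N2
          \<and> (\<forall>a b. N1 a b \<inter> N2 a b = {fzero}
               \<and> M a b = {(\<lambda>p. x p + y p) | x y. x \<in> N1 a b \<and> y \<in> N2 a b}))"

text \<open>Tensor products, realized concretely: v \<otimes> w as the function (p,q) -> v p * w q;
  V \<otimes> W is the span of these (k^X \<otimes> k^Y embeds into k^(X \<times> Y)).\<close>

definition span_fn :: "('x \<Rightarrow> 'k::field) set \<Rightarrow> ('x \<Rightarrow> 'k) set" where
  "span_fn G = {u. \<exists>F c. finite F \<and> F \<subseteq> G \<and> u = (\<lambda>p. \<Sum>g\<in>F. c g * g p)}"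

definition tens :: "('x \<Rightarrow> 'k::field) \<Rightarrow> ('y \<Rightarrow> 'k) \<Rightarrow> ('x \<times> 'y \<Rightarrow> 'k)" where
  "tens v w = (\<lambda>(p, q). v p * w q)"

definition tensor_sp :: "('x \<Rightarrow> 'k::field) set \<Rightarrow> ('y \<Rightarrow> 'k) set \<Rightarrow> ('x \<times> 'y \<Rightarrow> 'k) set" where
  "tensor_sp V W = span_fn {tens v w | v w. v \<in> V \<and> w \<in> W}"

definition dsum_sp :: "'i set \<Rightarrow> ('i \<Rightarrow> ('r \<Rightarrow> 'k::field) set) \<Rightarrow> ('i \<times> 'r \<Rightarrow> 'k) set" where
  "dsum_sp I T = {F. finite {i. \<exists>r. F (i, r) \<noteq> 0}
       \<and> (\<forall>i. (\<lambda>r. F (i, r)) \<in> (if i \<in> I then T i else {fzero}))}"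

definition dsum_inj :: "'i \<Rightarrow> ('r \<Rightarrow> 'k::field) \<Rightarrow> ('i \<times> 'r \<Rightarrow> 'k)" where
  "dsum_inj i u = (\<lambda>(j, r). if j = i then u r else 0)"

text \<open>Naturality is
  required on the spanning pure tensors (the action of (f,g) on V \<boxtimes> W is the linear
  extension of v \<otimes> w -> (V f v) \<otimes> (W g w)).\<close>

definition FI2_iso_dsum_boxtimes ::
  "(nat \<Rightarrow> nat \<Rightarrow> ('z \<Rightarrow> 'k::field) set)
   \<Rightarrow> (nat \<Rightarrow> nat \<Rightarrow> nat \<Rightarrow> nat \<Rightarrow> (nat \<Rightarrow> nat) \<Rightarrow> (nat \<Rightarrow> nat) \<Rightarrow> ('z \<Rightarrow> 'k) \<Rightarrow> ('z \<Rightarrow> 'k))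
   \<Rightarrow> 'i set
   \<Rightarrow> ('i \<Rightarrow> nat \<Rightarrow> ('x \<Rightarrow> 'k) set)
   \<Rightarrow> ('i \<Rightarrow> nat \<Rightarrow> nat \<Rightarrow> (nat \<Rightarrow> nat) \<Rightarrow> ('x \<Rightarrow> 'k) \<Rightarrow> ('x \<Rightarrow> 'k))
   \<Rightarrow> ('i \<Rightarrow> nat \<Rightarrow> ('y \<Rightarrow> 'k) set)
   \<Rightarrow> ('i \<Rightarrow> nat \<Rightarrow> nat \<Rightarrow> (nat \<Rightarrow> nat) \<Rightarrow> ('y \<Rightarrow> 'k) \<Rightarrow> ('y \<Rightarrow> 'k))
   \<Rightarrow> bool" where
  "FI2_iso_dsum_boxtimes M act I V actV W actW \<longleftrightarrow>
    (\<exists>psi :: nat \<Rightarrow> nat \<Rightarrow> ('i \<times> ('x \<times> 'y) \<Rightarrow> 'k) \<Rightarrow> ('z \<Rightarrow> 'k).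
       (\<forall>a b. linear_on (dsum_sp I (\<lambda>i. tensor_sp (V i a) (W i b))) (M a b) (psi a b)
          \<and> bij_betw (psi a b) (dsum_sp I (\<lambda>i. tensor_sp (V i a) (W i b))) (M a b))
     \<and> (\<forall>a b a' b' f g i v w. fi_mor a a' f \<and> fi_mor b b' g \<and> i \<in> I
          \<and> v \<in> V i a \<and> w \<in> W i b \<longrightarrow>
          act a b a' b' f g (psi a b (dsum_inj i (tens v w)))
          = psi a' b' (dsum_inj i (tens (actV i a a' f v) (actW i b b' g w)))))"

text \<open>The module M of the theorem, with values in unit => 'k (a copy of k).\<close>

definition M7_sp :: "nat \<Rightarrow> nat \<Rightarrow> (unit \<Rightarrow> 'k::field) set" where
  "M7_sp a b = (if (a, b) \<in> {(0, 0), (1, 0), (0, 1)} then {fzero} else UNIV)"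

definition M7_act :: "nat \<Rightarrow> nat \<Rightarrow> nat \<Rightarrow> nat \<Rightarrow> (nat \<Rightarrow> nat) \<Rightarrow> (nat \<Rightarrow> nat)
    \<Rightarrow> (unit \<Rightarrow> 'k::field) \<Rightarrow> (unit \<Rightarrow> 'k)" where
  "M7_act a b a' b' f g x = x"

end

theory Submission
  imports Defs
begin

text \<open>Every map of M is the identity and M is nonzero exactly from (1,1), (2,0), (0,2) on,
  so any two nonzero submodules meet in the one-dimensional space far out, which gives
  indecomposability. If M were a sum of summands V_i \<boxtimes> W_i, the nonzero space M_{2,0}
  would force some summand i with V_i(2) \<noteq> 0 and W_i(0) \<noteq> 0, and M_{0,2} a summand j
  with V_j(0) \<noteq> 0 and W_j(2) \<noteq> 0. Then i \<noteq> j, as otherwise V_i(0) \<otimes> W_i(0) \<noteq> 0 would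
  embed into M_{0,0} = 0; but then both summands contribute independent vectors to the
  line M_{2,2}.\<close>

lemma fi_mor_le: "fi_mor a a' f \<Longrightarrow> a \<le> a'"
  unfolding fi_mor_def using card_inj_on_le[of f "{..<a}" "{..<a'}"] by simp

lemma fi_mor_id: "a \<le> a' \<Longrightarrow> fi_mor a a' id"
  unfolding fi_mor_def by auto

lemma FI_module_act_mem:
  assumes "FI_module V act" "fi_mor a a' f" "v \<in> V a"
  shows "act a a' f v \<in> V a'"
proof -
  have "linear_on (V a) (V a') (act a a' f)" using assms(1,2) unfolding FI_module_def by blast
  then show ?thesis using assms(3) unfolding linear_on_def by blast
qed

lemma subspace_fn_singleton_fzero: "subspace_fn {fzero}"
  unfolding subspace_fn_def fzero_def by auto

lemma subspace_fn_UNIV: "subspace_fn UNIV"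
  unfolding subspace_fn_def by auto

lemma subspace_fn_add: "subspace_fn S \<Longrightarrow> u \<in> S \<Longrightarrow> v \<in> S \<Longrightarrow> (\<lambda>p. u p + v p) \<in> S"
  unfolding subspace_fn_def by blast

lemma subspace_fn_smult: "subspace_fn S \<Longrightarrow> v \<in> S \<Longrightarrow> (\<lambda>p. c * v p) \<in> S"
  unfolding subspace_fn_def by blast

lemma subspace_fn_fzero_mem: "subspace_fn S \<Longrightarrow> fzero \<in> S"
  unfolding subspace_fn_def by blast

lemma subspace_fn_lincomb:
  assumes S: "subspace_fn S" and "finite E" and "\<forall>g\<in>E. h g \<in> S"
  shows "(\<lambda>p. \<Sum>g\<in>E. c g * h g p) \<in> S"
  using assms(2,3)
proof (induction E rule: finite_induct)
  case empty
  then show ?case using S by (simp add: subspace_fn_def fzero_def)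
next
  case (insert x E)
  then have "(\<lambda>p. c x * h x p) \<in> S" "(\<lambda>p. \<Sum>g\<in>E. c g * h g p) \<in> S"
    using S unfolding subspace_fn_def by auto
  then show ?case using S insert.hyps unfolding subspace_fn_def by simp
qed

lemma linear_on_fzero:
  assumes "linear_on D T h" "fzero \<in> D"
  shows "h fzero = fzero"
proof -
  have "h (\<lambda>p. 0 * fzero p) = (\<lambda>q. 0 * h fzero q)"
    using assms unfolding linear_on_def by blast
  then show ?thesis by (simp add: fzero_def)
qed

lemma subspace_fn_preimage:
  assumes A: "subspace_fn A" and h: "linear_on A B h" and S: "subspace_fn S"
  shows "subspace_fn {u \<in> A. h u \<in> S}"
proof -
  have "fzero \<in> A" "h fzero \<in> S"
    using linear_on_fzero[OF h] A S by (simp_all add: subspace_fn_def)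
  moreover have "h (\<lambda>p. u p + v p) \<in> S" if "u \<in> A" "v \<in> A" "h u \<in> S" "h v \<in> S" for u v
    using that h S unfolding linear_on_def subspace_fn_def by simp
  moreover have "h (\<lambda>p. c * v p) \<in> S" if "v \<in> A" "h v \<in> S" for c v
    using that h S unfolding linear_on_def subspace_fn_def by simp
  ultimately show ?thesis using A unfolding subspace_fn_def by simp
qed

lemma linear_on_inj_to_fzero:
  assumes "linear_on D {fzero} h" "inj_on h D" "fzero \<in> D" "x \<in> D"
  shows "x = fzero"
proof (rule inj_onD[OF assms(2) _ assms(4,3)])
  show "h x = h fzero"
    using assms(1,4) linear_on_fzero[OF assms(1,3)] unfolding linear_on_def by auto
qed

lemma unit_fun_eq_smult:
  fixes u v :: "unit \<Rightarrow> 'k::field"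
  assumes "v \<noteq> fzero"
  shows "u = (\<lambda>p. (u () / v ()) * v p)"
proof -
  have "v () \<noteq> 0" using assms by (auto simp: fzero_def fun_eq_iff)
  then show ?thesis by (simp add: fun_eq_iff)
qed

lemma linear_on_inj_to_line:
  fixes h :: "('x \<Rightarrow> 'k::field) \<Rightarrow> (unit \<Rightarrow> 'k)"
  assumes D: "subspace_fn D" and h: "linear_on D T h" "inj_on h D"
    and x: "x \<in> D" and y: "y \<in> D" "h y \<noteq> fzero"
  shows "\<exists>c. x = (\<lambda>p. c * y p)"
proof -
  define c where "c = h x () / h y ()"
  have "h x = (\<lambda>q. c * h y q)"
    unfolding c_def by (rule unit_fun_eq_smult[OF y(2)])
  also have "\<dots> = h (\<lambda>p. c * y p)"
    using h(1) y(1) unfolding linear_on_def by simp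
  finally have "x = (\<lambda>p. c * y p)"
    using h(2) x D y(1) unfolding subspace_fn_def inj_on_def by blast
  then show ?thesis ..
qed

lemma span_fn_gen: "g \<in> G \<Longrightarrow> g \<in> span_fn G"
  unfolding span_fn_def by (intro CollectI exI[of _ "{g}"] exI[of _ "\<lambda>_. 1"]) auto

lemma span_fn_least:
  assumes "subspace_fn S" "G \<subseteq> S"
  shows "span_fn G \<subseteq> S"
proof
  fix u assume "u \<in> span_fn G"
  then obtain E c where "finite E" "E \<subseteq> G" "u = (\<lambda>p. \<Sum>g\<in>E. c g * g p)"
    unfolding span_fn_def by blast
  then show "u \<in> S" using subspace_fn_lincomb[OF assms(1), of E id c] assms(2) by auto
qed

lemma span_fn_lincomb_extend:
  fixes c :: "('x \<Rightarrow> 'k::field) \<Rightarrow> 'k"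
  assumes "finite F" "E \<subseteq> F"
  shows "(\<Sum>g\<in>E. c g * g p) = (\<Sum>g\<in>F. (if g \<in> E then c g else 0) * g p)"
  by (rule sum.mono_neutral_cong_left) (use assms in auto)

lemma subspace_fn_span_fn: "subspace_fn (span_fn G)"
  unfolding subspace_fn_def
proof (intro conjI ballI allI)
  show "fzero \<in> span_fn G"
    unfolding span_fn_def fzero_def by force
next
  fix u v assume "u \<in> span_fn G" "v \<in> span_fn G"
  then obtain E1 c1 E2 c2 where
    E: "finite E1" "E1 \<subseteq> G" "u = (\<lambda>p. \<Sum>g\<in>E1. c1 g * g p)"
       "finite E2" "E2 \<subseteq> G" "v = (\<lambda>p. \<Sum>g\<in>E2. c2 g * g p)"
    unfolding span_fn_def by blast
  define c where "c g = (if g \<in> E1 then c1 g else 0) + (if g \<in> E2 then c2 g else 0)" for g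
  have "u p = (\<Sum>g\<in>E1 \<union> E2. (if g \<in> E1 then c1 g else 0) * g p)"
    and "v p = (\<Sum>g\<in>E1 \<union> E2. (if g \<in> E2 then c2 g else 0) * g p)" for p
    using span_fn_lincomb_extend[of "E1 \<union> E2" E1 c1 p] span_fn_lincomb_extend[of "E1 \<union> E2" E2 c2 p]
    unfolding E(3,6) using E(1,4) by simp_all
  then have "(\<lambda>p. u p + v p) = (\<lambda>p. \<Sum>g\<in>E1 \<union> E2. c g * g p)"
    by (simp add: c_def distrib_right sum.distrib)
  moreover have "finite (E1 \<union> E2)" "E1 \<union> E2 \<subseteq> G" using E by auto
  ultimately show "(\<lambda>p. u p + v p) \<in> span_fn G"
    unfolding span_fn_def by blast
next
  fix a v assume "v \<in> span_fn G"
  then obtain E c where E: "finite E" "E \<subseteq> G" "v = (\<lambda>p. \<Sum>g\<in>E. c g * g p)"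
    unfolding span_fn_def by blast
  have "(\<lambda>p. a * v p) = (\<lambda>p. \<Sum>g\<in>E. (a * c g) * g p)"
    unfolding E(3) by (simp add: sum_distrib_left mult.assoc)
  with E(1,2) show "(\<lambda>p. a * v p) \<in> span_fn G"
    unfolding span_fn_def by (intro CollectI exI[of _ E] exI[of _ "\<lambda>g. a * c g"] conjI)
qed

lemma dsum_sp_component:
  "F \<in> dsum_sp I T \<Longrightarrow> (\<lambda>r. F (i, r)) \<in> (if i \<in> I then T i else {fzero})"
  unfolding dsum_sp_def by blast

lemma subspace_fn_dsum_sp:
  fixes T :: "'i \<Rightarrow> ('r \<Rightarrow> 'k::field) set"
  assumes T: "\<forall>i\<in>I. subspace_fn (T i)"
  shows "subspace_fn (dsum_sp I T)"
proof -
  let ?T = "\<lambda>i. if i \<in> I then T i else {fzero}"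
  have sub: "subspace_fn (?T i)" for i
    using T subspace_fn_singleton_fzero by auto
  have "fzero \<in> dsum_sp I T"
    using sub unfolding dsum_sp_def subspace_fn_def by (simp add: fzero_def)
  moreover have "(\<lambda>p. F p + H p) \<in> dsum_sp I T" if FH: "F \<in> dsum_sp I T" "H \<in> dsum_sp I T" for F H
  proof -
    have "{i. \<exists>r. F (i, r) + H (i, r) \<noteq> 0} \<subseteq> {i. \<exists>r. F (i, r) \<noteq> 0} \<union> {i. \<exists>r. H (i, r) \<noteq> 0}"
      by auto
    moreover have "(\<lambda>r. F (i, r) + H (i, r)) \<in> ?T i" for i
      by (rule subspace_fn_add[OF sub dsum_sp_component[OF FH(1)] dsum_sp_component[OF FH(2)]])
    ultimately show ?thesis using FH unfolding dsum_sp_def by (auto intro: finite_subset)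
  qed
  moreover have "(\<lambda>p. c * F p) \<in> dsum_sp I T" if F: "F \<in> dsum_sp I T" for c F
  proof -
    have "{i. \<exists>r. c * F (i, r) \<noteq> 0} \<subseteq> {i. \<exists>r. F (i, r) \<noteq> 0}"
      by auto
    moreover have "(\<lambda>r. c * F (i, r)) \<in> ?T i" for i
      by (rule subspace_fn_smult[OF sub dsum_sp_component[OF F]])
    ultimately show ?thesis using F unfolding dsum_sp_def by (auto intro: finite_subset)
  qed
  ultimately show ?thesis unfolding subspace_fn_def by blast
qed

lemma linear_on_dsum_inj:
  assumes T: "\<forall>j\<in>I. subspace_fn (T j)" and i: "i \<in> I"
  shows "linear_on (T i) (dsum_sp I T) (dsum_inj i)"
proof -
  have "dsum_inj i u \<in> dsum_sp I T" if u: "u \<in> T i" for u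
  proof -
    have "{j. \<exists>r. dsum_inj i u (j, r) \<noteq> 0} \<subseteq> {i}" by (auto simp: dsum_inj_def)
    moreover have "(\<lambda>r. dsum_inj i u (j, r)) \<in> (if j \<in> I then T j else {fzero})" for j
      using u i T by (cases "j = i") (auto simp: dsum_inj_def subspace_fn_def fzero_def)
    ultimately show ?thesis unfolding dsum_sp_def by (auto intro: finite_subset)
  qed
  then show ?thesis unfolding linear_on_def dsum_inj_def by (auto simp: fun_eq_iff)
qed

text \<open>A finitely supported family is the finite sum of its components.\<close>

lemma dsum_sp_least:
  fixes T :: "'i \<Rightarrow> ('r \<Rightarrow> 'k::field) set"
  assumes S: "subspace_fn S" and inj: "\<forall>i\<in>I. \<forall>u\<in>T i. dsum_inj i u \<in> S"
  shows "dsum_sp I T \<subseteq> S"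
proof
  fix F assume F: "F \<in> dsum_sp I T"
  define E where "E = {i. \<exists>r. F (i, r) \<noteq> 0}"
  have E: "finite E" using F unfolding E_def dsum_sp_def by blast
  have "E \<subseteq> I"
  proof
    fix i assume "i \<in> E"
    then obtain r where "F (i, r) \<noteq> 0" unfolding E_def by blast
    then have "(\<lambda>r. F (i, r)) \<noteq> fzero" by (auto simp: fzero_def fun_eq_iff)
    then show "i \<in> I" using dsum_sp_component[OF F, of i] by (auto split: if_splits)
  qed
  then have "\<forall>i\<in>E. dsum_inj i (\<lambda>r. F (i, r)) \<in> S"
    using inj dsum_sp_component[OF F] by (metis subsetD)
  from subspace_fn_lincomb[OF S E this, of "\<lambda>_. 1"]
  have "(\<lambda>p. \<Sum>i\<in>E. dsum_inj i (\<lambda>r. F (i, r)) p) \<in> S" by simp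
  moreover have "(\<lambda>p. \<Sum>i\<in>E. dsum_inj i (\<lambda>r. F (i, r)) p) = F"
  proof
    fix p :: "'i \<times> 'r"
    show "(\<Sum>i\<in>E. dsum_inj i (\<lambda>r. F (i, r)) p) = F p"
      using E by (cases p) (auto simp: dsum_inj_def sum.delta E_def)
  qed
  ultimately show "F \<in> S" by simp
qed

lemma linear_on_dsum_span_vanishes:
  assumes h: "linear_on (dsum_sp I (\<lambda>i. span_fn (G i))) T h"
    and gen: "\<forall>i\<in>I. \<forall>g\<in>G i. h (dsum_inj i g) = fzero"
    and F: "F \<in> dsum_sp I (\<lambda>i. span_fn (G i))"
  shows "h F = fzero"
proof -
  let ?D = "dsum_sp I (\<lambda>i. span_fn (G i))"
  let ?K = "{F \<in> ?D. h F \<in> {fzero}}"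
  have spans: "\<forall>i\<in>I. subspace_fn (span_fn (G i))" by (simp add: subspace_fn_span_fn)
  have D: "subspace_fn ?D" by (rule subspace_fn_dsum_sp[OF spans])
  have K: "subspace_fn ?K" by (rule subspace_fn_preimage[OF D h subspace_fn_singleton_fzero])
  have "\<forall>i\<in>I. \<forall>u\<in>span_fn (G i). dsum_inj i u \<in> ?K"
  proof (intro ballI)
    fix i u assume i: "i \<in> I" and u: "u \<in> span_fn (G i)"
    note inj = linear_on_dsum_inj[OF spans i]
    have "G i \<subseteq> {u \<in> span_fn (G i). dsum_inj i u \<in> ?K}"
    proof
      fix g assume g: "g \<in> G i"
      then have "g \<in> span_fn (G i)" by (rule span_fn_gen)
      moreover then have "dsum_inj i g \<in> ?D" using inj unfolding linear_on_def by blast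
      ultimately show "g \<in> {u \<in> span_fn (G i). dsum_inj i u \<in> ?K}" using gen i g by simp
    qed
    with u show "dsum_inj i u \<in> ?K"
      using span_fn_least[OF subspace_fn_preimage[OF subspace_fn_span_fn inj K]] by blast
  qed
  then have "?D \<subseteq> ?K" by (rule dsum_sp_least[OF K])
  then show ?thesis using F by auto
qed

lemma dsum_inj_tens_mem:
  "i \<in> I \<Longrightarrow> v \<in> V i a \<Longrightarrow> w \<in> W i b
    \<Longrightarrow> dsum_inj i (tens v w) \<in> dsum_sp I (\<lambda>i. tensor_sp (V i a) (W i b))"
  using linear_on_dsum_inj[of I "\<lambda>i. tensor_sp (V i a) (W i b)" i]
  unfolding tensor_sp_def linear_on_def by (blast intro: span_fn_gen subspace_fn_span_fn)

lemma dsum_inj_tens_eq_fzero_iff: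
  "dsum_inj i (tens v w) = fzero \<longleftrightarrow> v = fzero \<or> w = fzero"
proof
  assume "dsum_inj i (tens v w) = fzero"
  then have "dsum_inj i (tens v w) (i, p, q) = 0" for p q by (simp add: fzero_def)
  then have "v p * w q = 0" for p q by (simp add: dsum_inj_def tens_def)
  then show "v = fzero \<or> w = fzero" by (auto simp: fzero_def fun_eq_iff)
qed (auto simp: fun_eq_iff dsum_inj_def tens_def fzero_def)

lemma dsum_inj_eq_smult_dsum_inj:
  assumes "i \<noteq> j" "dsum_inj i u = (\<lambda>p. c * dsum_inj j u' p)"
  shows "dsum_inj i u = fzero"
proof
  fix p :: "'a \<times> 'b"
  obtain k r where p: "p = (k, r)" by (cases p)
  have "dsum_inj i u (k, r) = c * dsum_inj j u' (k, r)" using assms(2) by (rule fun_cong)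
  then show "dsum_inj i u p = fzero p"
    using assms(1) unfolding p by (cases "k = i") (simp_all add: dsum_inj_def fzero_def)
qed

lemma linear_on_inj_to_line_dsum_inj_eq:
  fixes h :: "('i \<times> 'r \<Rightarrow> 'k::field) \<Rightarrow> (unit \<Rightarrow> 'k)"
  assumes D: "subspace_fn D" and h: "linear_on D T h" "inj_on h D"
    and mem: "dsum_inj i u \<in> D" "dsum_inj j u' \<in> D"
    and nz: "h (dsum_inj i u) \<noteq> fzero" "h (dsum_inj j u') \<noteq> fzero"
  shows "i = j"
proof (rule ccontr)
  assume "i \<noteq> j"
  obtain c where "dsum_inj i u = (\<lambda>p. c * dsum_inj j u' p)"
    using linear_on_inj_to_line[OF D h mem nz(2)] by blast
  then have "dsum_inj i u = fzero" by (rule dsum_inj_eq_smult_dsum_inj[OF \<open>i \<noteq> j\<close>])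
  then show False
    using nz(1) linear_on_fzero[OF h(1) subspace_fn_fzero_mem[OF D]] by simp
qed

lemma subspace_fn_dsum_tensor_sp: "subspace_fn (dsum_sp I (\<lambda>i. tensor_sp (V i a) (W i b)))"
  unfolding tensor_sp_def by (simp add: subspace_fn_dsum_sp subspace_fn_span_fn)

lemma dsum_tensor_ex_pure_not_fzero:
  assumes h: "linear_on (dsum_sp I (\<lambda>i. tensor_sp (V i a) (W i b))) T h"
    and onto: "h ` dsum_sp I (\<lambda>i. tensor_sp (V i a) (W i b)) = T"
    and e: "e \<in> T" "e \<noteq> fzero"
  shows "\<exists>i\<in>I. \<exists>v\<in>V i a. \<exists>w\<in>W i b. h (dsum_inj i (tens v w)) \<noteq> fzero"
proof (rule ccontr)
  assume "\<not> ?thesis"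
  then have "\<forall>i\<in>I. \<forall>g\<in>{tens v w | v w. v \<in> V i a \<and> w \<in> W i b}. h (dsum_inj i g) = fzero"
    by blast
  from linear_on_dsum_span_vanishes[OF h[unfolded tensor_sp_def] this]
  have "\<forall>F \<in> dsum_sp I (\<lambda>i. tensor_sp (V i a) (W i b)). h F = fzero"
    unfolding tensor_sp_def by blast
  then show False using onto e by blast
qed

lemma FI2_iso_dsum_boxtimesE:
  assumes "FI2_iso_dsum_boxtimes M act I V actV W actW"
  obtains psi where
    "\<And>a b. linear_on (dsum_sp I (\<lambda>i. tensor_sp (V i a) (W i b))) (M a b) (psi a b)"
    "\<And>a b. inj_on (psi a b) (dsum_sp I (\<lambda>i. tensor_sp (V i a) (W i b)))"
    "\<And>a b. psi a b ` dsum_sp I (\<lambda>i. tensor_sp (V i a) (W i b)) = M a b"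
    "\<And>a b a' b' f g i v w. fi_mor a a' f \<Longrightarrow> fi_mor b b' g \<Longrightarrow> i \<in> I
      \<Longrightarrow> v \<in> V i a \<Longrightarrow> w \<in> W i b \<Longrightarrow> act a b a' b' f g (psi a b (dsum_inj i (tens v w)))
          = psi a' b' (dsum_inj i (tens (actV i a a' f v) (actW i b b' g w)))"
proof -
  obtain psi where
    iso: "\<forall>a b. linear_on (dsum_sp I (\<lambda>i. tensor_sp (V i a) (W i b))) (M a b) (psi a b)
      \<and> bij_betw (psi a b) (dsum_sp I (\<lambda>i. tensor_sp (V i a) (W i b))) (M a b)"
    and nat: "\<forall>a b a' b' f g i v w. fi_mor a a' f \<and> fi_mor b b' g \<and> i \<in> I
      \<and> v \<in> V i a \<and> w \<in> W i b \<longrightarrow> act a b a' b' f g (psi a b (dsum_inj i (tens v w)))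
          = psi a' b' (dsum_inj i (tens (actV i a a' f v) (actW i b b' g w)))"
    using assms unfolding FI2_iso_dsum_boxtimes_def by blast
  show thesis
    by (rule that[of psi]) (use iso nat in \<open>simp_all add: bij_betw_def\<close>)
qed

lemma M7_sp_cases:
  "M7_sp 0 0 = {fzero}" "M7_sp 2 0 = UNIV" "M7_sp 0 2 = UNIV" "M7_sp 2 2 = UNIV"
  by (auto simp: M7_sp_def)

lemma M7_module: "FI2_module (M7_sp :: nat \<Rightarrow> nat \<Rightarrow> (unit \<Rightarrow> 'k::field) set) M7_act"
proof -
  have "subspace_fn (M7_sp a b :: (unit \<Rightarrow> 'k) set)" for a b
    unfolding M7_sp_def by (simp add: subspace_fn_singleton_fzero subspace_fn_UNIV)
  moreover have "v \<in> M7_sp a' b'" if "fi_mor a a' f" "fi_mor b b' g" "v \<in> M7_sp a b"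
    for a b a' b' f g and v :: "unit \<Rightarrow> 'k"
    using fi_mor_le[OF that(1)] fi_mor_le[OF that(2)] that(3)
    unfolding M7_sp_def by (auto split: if_splits)
  ultimately show ?thesis
    unfolding FI2_module_def M7_act_def linear_on_def by blast
qed

lemma M7_submodule_mono:
  assumes "FI2_submodule M7_sp M7_act N" "a \<le> a'" "b \<le> b'"
  shows "N a b \<subseteq> N a' b'"
  using assms fi_mor_id unfolding FI2_submodule_def M7_act_def by blast

lemma FI2_submodule_ex_nonzero:
  assumes "FI2_submodule M act N" "nonzero_sp N"
  obtains a b v where "v \<in> N a b" "v \<noteq> fzero"
  using assms unfolding FI2_submodule_def subspace_fn_def nonzero_sp_def by blast

lemma M7_indecomposable:
  "FI2_indecomposable (M7_sp :: nat \<Rightarrow> nat \<Rightarrow> (unit \<Rightarrow> 'k::field) set) M7_act"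
  unfolding FI2_indecomposable_def
proof (intro conjI notI M7_module)
  have "(\<lambda>_. 1) \<in> (M7_sp 2 2 :: (unit \<Rightarrow> 'k) set)" "(\<lambda>_::unit. 1::'k) \<noteq> fzero"
    by (auto simp: M7_sp_cases fzero_def fun_eq_iff)
  then show "nonzero_sp (M7_sp :: nat \<Rightarrow> nat \<Rightarrow> (unit \<Rightarrow> 'k::field) set)"
    unfolding nonzero_sp_def by blast
next
  assume "\<exists>N1 N2. FI2_submodule (M7_sp :: nat \<Rightarrow> nat \<Rightarrow> (unit \<Rightarrow> 'k) set) M7_act N1
      \<and> FI2_submodule M7_sp M7_act N2 \<and> nonzero_sp N1 \<and> nonzero_sp N2
      \<and> (\<forall>a b. N1 a b \<inter> N2 a b = {fzero}
          \<and> M7_sp a b = {(\<lambda>p. x p + y p) |x y. x \<in> N1 a b \<and> y \<in> N2 a b})"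
  then obtain N1 N2 :: "nat \<Rightarrow> nat \<Rightarrow> (unit \<Rightarrow> 'k) set"
    where N: "FI2_submodule M7_sp M7_act N1" "FI2_submodule M7_sp M7_act N2"
      and nz: "nonzero_sp N1" "nonzero_sp N2" and disj: "\<And>a b. N1 a b \<inter> N2 a b = {fzero}"
    by blast
  obtain a1 b1 v1 where v1: "v1 \<in> N1 a1 b1" "v1 \<noteq> fzero"
    using FI2_submodule_ex_nonzero[OF N(1) nz(1)] .
  obtain a2 b2 v2 where v2: "v2 \<in> N2 a2 b2" "v2 \<noteq> fzero"
    using FI2_submodule_ex_nonzero[OF N(2) nz(2)] .
  let ?a = "a1 + a2" and ?b = "b1 + b2"
  have "v1 \<in> N1 ?a ?b" using M7_submodule_mono[OF N(1) le_add1 le_add1] v1(1) by blast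
  moreover have "subspace_fn (N1 ?a ?b)" using N(1) unfolding FI2_submodule_def by blast
  ultimately have "(\<lambda>p. (v2 () / v1 ()) * v1 p) \<in> N1 ?a ?b" by (rule subspace_fn_smult[rotated])
  then have "v2 \<in> N1 ?a ?b" using unit_fun_eq_smult[OF v1(2), of v2] by simp
  moreover have "v2 \<in> N2 ?a ?b" using M7_submodule_mono[OF N(2) le_add2 le_add2] v2(1) by blast
  ultimately show False using disj[of ?a ?b] v2(2) by blast
qed

lemma M7_not_iso_dsum_boxtimes:
  fixes V :: "'i \<Rightarrow> nat \<Rightarrow> ('x \<Rightarrow> 'k::field) set" and W :: "'i \<Rightarrow> nat \<Rightarrow> ('y \<Rightarrow> 'k) set"
  assumes FI: "\<forall>i\<in>I. FI_module (V i) (actV i) \<and> FI_module (W i) (actW i)"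
  shows "\<not> FI2_iso_dsum_boxtimes (M7_sp :: nat \<Rightarrow> nat \<Rightarrow> (unit \<Rightarrow> 'k) set) M7_act I V actV W actW"
proof
  let ?D = "\<lambda>a b. dsum_sp I (\<lambda>i. tensor_sp (V i a) (W i b))"
  assume "FI2_iso_dsum_boxtimes (M7_sp :: nat \<Rightarrow> nat \<Rightarrow> (unit \<Rightarrow> 'k) set) M7_act I V actV W actW"
  then obtain psi :: "nat \<Rightarrow> nat \<Rightarrow> ('i \<times> ('x \<times> 'y) \<Rightarrow> 'k) \<Rightarrow> (unit \<Rightarrow> 'k)"
    where lin: "\<And>a b. linear_on (?D a b) (M7_sp a b) (psi a b)"
      and inj: "\<And>a b. inj_on (psi a b) (?D a b)"
      and onto: "\<And>a b. psi a b ` ?D a b = M7_sp a b"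
      and nat: "\<And>a b a' b' f g i v w. fi_mor a a' f \<Longrightarrow> fi_mor b b' g \<Longrightarrow> i \<in> I
        \<Longrightarrow> v \<in> V i a \<Longrightarrow> w \<in> W i b \<Longrightarrow> psi a b (dsum_inj i (tens v w))
          = psi a' b' (dsum_inj i (tens (actV i a a' f v) (actW i b b' g w)))"
    by (elim FI2_iso_dsum_boxtimesE) (unfold M7_act_def, blast)
  have D: "\<And>a b. subspace_fn (?D a b)" by (rule subspace_fn_dsum_tensor_sp)
  have D0: "\<And>a b. fzero \<in> ?D a b"
    using D by (rule subspace_fn_fzero_mem)
  have psi_fzero: "\<And>a b. psi a b fzero = fzero"
    using lin D0 by (rule linear_on_fzero)
  have ones: "(\<lambda>_. 1) \<in> M7_sp 2 0" "(\<lambda>_. 1) \<in> M7_sp 0 2" "(\<lambda>_::unit. 1::'k) \<noteq> fzero"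
    by (auto simp: M7_sp_cases fzero_def fun_eq_iff)
  obtain i v w where i: "i \<in> I" "v \<in> V i 2" "w \<in> W i 0"
    and e1: "psi 2 0 (dsum_inj i (tens v w)) \<noteq> fzero"
    using dsum_tensor_ex_pure_not_fzero[where V = V and W = W and a = 2 and b = 0, OF lin onto ones(1,3)]
    by blast
  obtain j v' w' where j: "j \<in> I" "v' \<in> V j 0" "w' \<in> W j 2"
    and e2: "psi 0 2 (dsum_inj j (tens v' w')) \<noteq> fzero"
    using dsum_tensor_ex_pure_not_fzero[where V = V and W = W and a = 0 and b = 2, OF lin onto ones(2,3)]
    by blast
  have "dsum_inj i (tens v w) \<noteq> fzero" "dsum_inj j (tens v' w') \<noteq> fzero"
    using e1 e2 psi_fzero by metis+
  then have "w \<noteq> fzero" "v' \<noteq> fzero"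
    by (simp_all add: dsum_inj_tens_eq_fzero_iff)
  have "i \<noteq> j"
  proof
    assume "i = j"
    then have "dsum_inj i (tens v' w) \<in> ?D 0 0"
      using i j by (simp add: dsum_inj_tens_mem)
    with lin[of 0 0] have "dsum_inj i (tens v' w) = fzero"
      unfolding M7_sp_cases(1) using linear_on_inj_to_fzero inj D0 by blast
    with \<open>w \<noteq> fzero\<close> \<open>v' \<noteq> fzero\<close> show False
      by (simp add: dsum_inj_tens_eq_fzero_iff)
  qed
  have to22: "fi_mor 2 2 id" "fi_mor 0 2 id" by (simp_all add: fi_mor_id)
  have FIi: "FI_module (V i) (actV i)" "FI_module (W i) (actW i)"
    and FIj: "FI_module (V j) (actV j)" "FI_module (W j) (actW j)"
    using FI i(1) j(1) by auto
  \<comment> \<open>Naturality moves both vectors into M_{2,2} unchanged, since every map of M is the identity.\<close>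
  let ?x1 = "dsum_inj i (tens (actV i 2 2 id v) (actW i 0 2 id w))"
  let ?x2 = "dsum_inj j (tens (actV j 0 2 id v') (actW j 2 2 id w'))"
  have x1: "?x1 \<in> ?D 2 2" "psi 2 2 ?x1 \<noteq> fzero"
    using dsum_inj_tens_mem[where V = V and W = W,
        OF i(1) FI_module_act_mem[OF FIi(1) to22(1) i(2)] FI_module_act_mem[OF FIi(2) to22(2) i(3)]] e1 nat[OF to22(1,2) i]
    by simp_all
  have x2: "?x2 \<in> ?D 2 2" "psi 2 2 ?x2 \<noteq> fzero"
    using dsum_inj_tens_mem[where V = V and W = W,
        OF j(1) FI_module_act_mem[OF FIj(1) to22(2) j(2)] FI_module_act_mem[OF FIj(2) to22(1) j(3)]] e2 nat[OF to22(2,1) j]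
    by simp_all
  show False
    using linear_on_inj_to_line_dsum_inj_eq[OF D lin inj x1(1) x2(1) x1(2) x2(2)] \<open>i \<noteq> j\<close>
    by blast
qed

theorem mainTheorem7:
  fixes I :: "'i set"
    and V :: "'i \<Rightarrow> nat \<Rightarrow> ('x \<Rightarrow> 'k::field) set"
    and actV :: "'i \<Rightarrow> nat \<Rightarrow> nat \<Rightarrow> (nat \<Rightarrow> nat) \<Rightarrow> ('x \<Rightarrow> 'k) \<Rightarrow> ('x \<Rightarrow> 'k)"
    and W :: "'i \<Rightarrow> nat \<Rightarrow> ('y \<Rightarrow> 'k) set"
    and actW :: "'i \<Rightarrow> nat \<Rightarrow> nat \<Rightarrow> (nat \<Rightarrow> nat) \<Rightarrow> ('y \<Rightarrow> 'k) \<Rightarrow> ('y \<Rightarrow> 'k)"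
  shows "FI2_module (M7_sp :: nat \<Rightarrow> nat \<Rightarrow> (unit \<Rightarrow> 'k) set) M7_act
    \<and> FI2_indecomposable (M7_sp :: nat \<Rightarrow> nat \<Rightarrow> (unit \<Rightarrow> 'k) set) M7_act
    \<and> ((\<forall>i\<in>I. FI_module (V i) (actV i) \<and> FI_module (W i) (actW i))
        \<longrightarrow> \<not> FI2_iso_dsum_boxtimes (M7_sp :: nat \<Rightarrow> nat \<Rightarrow> (unit \<Rightarrow> 'k) set) M7_act I V actV W actW)"
  using M7_module M7_indecomposable M7_not_iso_dsum_boxtimes by blast

end
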